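(* For $\boldsymbol\theta\in\boldsymbol\Theta$ and $i\in\mathcal S,a\in\mathcal A$ define $$D_{i,a}(\boldsymbol\theta)=\pi^{\boldsymbol\theta}(i)\Big\{\sum_{j\in\mathcal S}p^a(i,j)g^{\boldsymbol\theta}(j)+r(i,a)-\beta r(i,a)^2+2\beta J^{\boldsymbol\theta}_\mu r(i,a)\Big\}.$$ Then $D_{i,a}(\boldsymbol\theta)$ is the derivative of the combined metric with respect to $\theta_{i,a}$, in the sense that for every $\boldsymbol\theta'\in\boldsymbol\Theta$, $$\frac{\mathrm d}{\mathrm dt}J^{\boldsymbol\theta+t(\boldsymbol\theta'-\boldsymbol\theta)}_{\mu,\sigma}\Big|_{t=0^+}=\sum_{i\in\mathcal S}\sum_{a\in\mathcal A}(\theta'_{i,a}-\theta_{i,a})\,D_{i,a}(\boldsymbol\theta).$$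
   Context: Let $\mathcal S=\{1,\dots,S\}$ be a finite state space and $\mathcal A$ a finite action set, with transition probabilities $p^a(i,j)\ge0$ ($\sum_j p^a(i,j)=1$) and rewards $r(i,a)\in\mathbb R$. Standing assumption: for every deterministic map $d:\mathcal S\to\mathcal A$, the matrix with entries $p^{d(i)}(i,j)$ is irreducible. The randomized policy space is $\boldsymbol\Theta=\{\boldsymbol\theta=(\theta_{i,a}):\theta_{i,a}\ge0,\ \sum_a\theta_{i,a}=1\ \forall i\}$ ($\theta_{i,a}$ = probability of action $a$ in state $i$); it is convex. Under $\boldsymbol\theta$ the transition matrix is $P^{\boldsymbol\theta}(i,j)=\sum_a p^a(i,j)\theta_{i,a}$; it is irreducible with unique stationary distribution $\boldsymbol\pi^{\boldsymbol\theta}$ having positive entries. The mean is $J^{\boldsymbol\theta}_\mu=\sum_i\pi^{\boldsymbol\theta}(i)\sum_a\theta_{i,a}r(i,a)$; for fixed $\beta>0$, $f^{\boldsymbol\theta}(i)=\sum_a\theta_{i,a}[r(i,a)-\beta(r(i,a)-J^{\boldsymbol\theta}_\mu)^2]$ and $J^{\boldsymbol\theta}_{\mu,\sigma}=\sum_i\pi^{\boldsymbol\theta}(i)f^{\boldsymbol\theta}(i)$. The potential $\mathbf g^{\boldsymbol\theta}$ is any solution of $\mathbf g^{\boldsymbol\theta}=\mathbf f^{\boldsymbol\theta}-J^{\boldsymbol\theta}_{\mu,\sigma}\mathbf 1+P^{\boldsymbol\theta}\mathbf g^{\boldsymbol\theta}$ (the right-hand side of the claimed formula does not depend on the choice). 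*)

theory Defs
  imports "HOL-Analysis.Analysis"
begin

definition irreducible_mat :: "('s \<Rightarrow> 's \<Rightarrow> real) \<Rightarrow> bool" where
  "irreducible_mat M \<longleftrightarrow> (\<forall>i j. (i, j) \<in> {(x, y). M x y > 0}\<^sup>*)"

(* randomized policy space Theta; theta i a = probability of action a in state i *)
definition Theta :: "('s::finite \<Rightarrow> 'a::finite \<Rightarrow> real) set" where
  "Theta = {\<theta>. (\<forall>i a. \<theta> i a \<ge> 0) \<and> (\<forall>i. (\<Sum>a\<in>UNIV. \<theta> i a) = 1)}"

(* transition matrix under theta; p a i j = p^a(i,j) *)
definition Pth :: "('a::finite \<Rightarrow> 's \<Rightarrow> 's \<Rightarrow> real) \<Rightarrow> ('s \<Rightarrow> 'a \<Rightarrow> real) \<Rightarrow> 's \<Rightarrow> 's \<Rightarrow> real" where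
  "Pth p \<theta> i j = (\<Sum>a\<in>UNIV. p a i j * \<theta> i a)"

definition stat_dist :: "('a::finite \<Rightarrow> 's::finite \<Rightarrow> 's \<Rightarrow> real) \<Rightarrow> ('s \<Rightarrow> 'a \<Rightarrow> real) \<Rightarrow> 's \<Rightarrow> real" where
  "stat_dist p \<theta> = (THE \<pi>. (\<forall>j. \<pi> j = (\<Sum>i\<in>UNIV. \<pi> i * Pth p \<theta> i j)) \<and> (\<Sum>i\<in>UNIV. \<pi> i) = 1)"

definition J_mu :: "('a::finite \<Rightarrow> 's::finite \<Rightarrow> 's \<Rightarrow> real) \<Rightarrow> ('s \<Rightarrow> 'a \<Rightarrow> real) \<Rightarrow> ('s \<Rightarrow> 'a \<Rightarrow> real) \<Rightarrow> real" where
  "J_mu p r \<theta> = (\<Sum>i\<in>UNIV. stat_dist p \<theta> i * (\<Sum>a\<in>UNIV. \<theta> i a * r i a))"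

definition f_th :: "('a::finite \<Rightarrow> 's::finite \<Rightarrow> 's \<Rightarrow> real) \<Rightarrow> ('s \<Rightarrow> 'a \<Rightarrow> real) \<Rightarrow> real \<Rightarrow> ('s \<Rightarrow> 'a \<Rightarrow> real) \<Rightarrow> 's \<Rightarrow> real" where
  "f_th p r \<beta> \<theta> i = (\<Sum>a\<in>UNIV. \<theta> i a * (r i a - \<beta> * (r i a - J_mu p r \<theta>)\<^sup>2))"

definition J_mu_sigma :: "('a::finite \<Rightarrow> 's::finite \<Rightarrow> 's \<Rightarrow> real) \<Rightarrow> ('s \<Rightarrow> 'a \<Rightarrow> real) \<Rightarrow> real \<Rightarrow> ('s \<Rightarrow> 'a \<Rightarrow> real) \<Rightarrow> real" where
  "J_mu_sigma p r \<beta> \<theta> = (\<Sum>i\<in>UNIV. stat_dist p \<theta> i * f_th p r \<beta> \<theta> i)"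

definition is_potential :: "('a::finite \<Rightarrow> 's::finite \<Rightarrow> 's \<Rightarrow> real) \<Rightarrow> ('s \<Rightarrow> 'a \<Rightarrow> real) \<Rightarrow> real \<Rightarrow> ('s \<Rightarrow> 'a \<Rightarrow> real) \<Rightarrow> ('s \<Rightarrow> real) \<Rightarrow> bool" where
  "is_potential p r \<beta> \<theta> g \<longleftrightarrow>
     (\<forall>i. g i = f_th p r \<beta> \<theta> i - J_mu_sigma p r \<beta> \<theta> + (\<Sum>j\<in>UNIV. Pth p \<theta> i j * g j))"

definition D_ia :: "('a::finite \<Rightarrow> 's::finite \<Rightarrow> 's \<Rightarrow> real) \<Rightarrow> ('s \<Rightarrow> 'a \<Rightarrow> real) \<Rightarrow> real \<Rightarrow> ('s \<Rightarrow> real) \<Rightarrow> ('s \<Rightarrow> 'a \<Rightarrow> real) \<Rightarrow> 's \<Rightarrow> 'a \<Rightarrow> real" where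
  "D_ia p r \<beta> g \<theta> i a = stat_dist p \<theta> i *
     ((\<Sum>j\<in>UNIV. p a i j * g j) + r i a - \<beta> * (r i a)\<^sup>2 + 2 * \<beta> * J_mu p r \<theta> * r i a)"

end

theory Submission
  imports Defs
begin

text \<open>Along the segment \<open>\<theta>\<^sub>t = \<theta> + t(\<theta>' - \<theta>)\<close> the transition matrix is affine,
  \<open>P\<^sub>t = P\<^sub>0 + t\<Delta>P\<close>. Writing \<open>J\<^sub>\<mu>\<^sub>,\<^sub>\<sigma> = \<pi>(r - \<beta>r\<^sup>2) + \<beta>J\<^sub>\<mu>\<^sup>2\<close> and pairing the potential equation
  of \<open>\<theta>\<close> with the stationary distribution \<open>\<pi>\<^sub>t\<close> of \<open>\<theta>\<^sub>t\<close> gives the exact identity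
  \<open>J\<^sub>\<mu>\<^sub>,\<^sub>\<sigma>(\<theta>\<^sub>t) - J\<^sub>\<mu>\<^sub>,\<^sub>\<sigma>(\<theta>) = t \<pi>\<^sub>t c + \<beta>(J\<^sub>\<mu>(\<theta>\<^sub>t) - J\<^sub>\<mu>(\<theta>))\<^sup>2\<close>, where \<open>\<pi>\<^sub>0 c\<close> is the claimed
  derivative. A solution \<open>h\<close> of the Poisson equation \<open>h - P\<^sub>0h = c - \<pi>\<^sub>0c\<close> turns
  \<open>\<pi>\<^sub>tc - \<pi>\<^sub>0c\<close> into \<open>t \<pi>\<^sub>t(\<Delta>P h)\<close>, so \<open>t \<mapsto> \<pi>\<^sub>t c\<close> and \<open>J\<^sub>\<mu>(\<theta>\<^sub>t)\<close> are Lipschitz at \<open>0\<close>: the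
  difference quotient is \<open>\<pi>\<^sub>0 c + O(t)\<close>.\<close>

lemma has_real_derivative_at_right_0I:
  fixes F :: "real \<Rightarrow> real"
  assumes "d > 0" and bound: "\<And>t. 0 < t \<Longrightarrow> t < d \<Longrightarrow> \<bar>(F t - F 0) / t - L\<bar> \<le> C * t"
  shows "(F has_real_derivative L) (at_right 0)"
proof -
  have "\<forall>\<^sub>F t in at_right 0. norm ((F t - F 0) / (t - 0) - L) \<le> C * t"
    using eventually_at_right_real[OF \<open>d > 0\<close>] by eventually_elim (use bound in auto)
  moreover have "((\<lambda>t::real. C * t) \<longlongrightarrow> 0) (at_right 0)"
    by (auto intro!: tendsto_eq_intros)
  ultimately have "((\<lambda>t. (F t - F 0) / (t - 0) - L) \<longlongrightarrow> 0) (at_right 0)"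
    by (rule Lim_null_comparison)
  then show ?thesis
    unfolding has_field_derivative_iff by (subst Lim_null)
qed

section \<open>Irreducible stochastic matrices\<close>

definition stochastic :: "('s::finite \<Rightarrow> 's \<Rightarrow> real) \<Rightarrow> bool" where
  "stochastic Q \<longleftrightarrow> (\<forall>i j. Q i j \<ge> 0) \<and> (\<forall>i. (\<Sum>j\<in>UNIV. Q i j) = 1)"

definition stationary :: "('s::finite \<Rightarrow> 's \<Rightarrow> real) \<Rightarrow> ('s \<Rightarrow> real) \<Rightarrow> bool" where
  "stationary Q v \<longleftrightarrow> (\<forall>j. v j = (\<Sum>i\<in>UNIV. v i * Q i j))"

lemma irreducible_mat_propagate:
  assumes "irreducible_mat Q" "Z k" "\<And>i j. Z i \<Longrightarrow> Q i j > 0 \<Longrightarrow> Z j"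
  shows "Z j"
proof -
  have "(k, j) \<in> {(x, y). Q x y > 0}\<^sup>*"
    using assms(1) unfolding irreducible_mat_def by blast
  then show ?thesis
    by (induction rule: rtrancl_induct) (use assms in auto)
qed

lemma stationary_lincomb:
  assumes "stationary Q x" "stationary Q y"
  shows "stationary Q (\<lambda>i. a * x i + b * y i)"
  unfolding stationary_def
proof
  fix j
  have "a * x j + b * y j = a * (\<Sum>i\<in>UNIV. x i * Q i j) + b * (\<Sum>i\<in>UNIV. y i * Q i j)"
    using assms unfolding stationary_def by metis
  also have "\<dots> = (\<Sum>i\<in>UNIV. (a * x i + b * y i) * Q i j)"
    by (simp add: sum_distrib_left sum.distrib algebra_simps)
  finally show "a * x j + b * y j = (\<Sum>i\<in>UNIV. (a * x i + b * y i) * Q i j)" .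
qed

lemma stationary_sum_mult:
  assumes "stationary Q \<pi>"
  shows "(\<Sum>i\<in>UNIV. \<pi> i * (\<Sum>j\<in>UNIV. Q i j * h j)) = (\<Sum>j\<in>UNIV. \<pi> j * h j)"
proof -
  have "(\<Sum>i\<in>UNIV. \<pi> i * (\<Sum>j\<in>UNIV. Q i j * h j)) = (\<Sum>i\<in>UNIV. \<Sum>j\<in>UNIV. \<pi> i * Q i j * h j)"
    by (simp add: sum_distrib_left mult.assoc)
  also have "\<dots> = (\<Sum>j\<in>UNIV. (\<Sum>i\<in>UNIV. \<pi> i * Q i j) * h j)"
    by (subst sum.swap) (simp add: sum_distrib_right)
  also have "\<dots> = (\<Sum>j\<in>UNIV. \<pi> j * h j)"
    using assms unfolding stationary_def by metis
  finally show ?thesis .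
qed

lemma stationary_abs:
  assumes "stochastic Q" "stationary Q v"
  shows "stationary Q (\<lambda>i. \<bar>v i\<bar>)"
proof -
  have Q_nonneg: "\<And>i j. Q i j \<ge> 0" and Q_rows: "\<And>i. (\<Sum>j\<in>UNIV. Q i j) = 1"
    using assms(1) unfolding stochastic_def by auto
  have le: "\<bar>v j\<bar> \<le> (\<Sum>i\<in>UNIV. \<bar>v i\<bar> * Q i j)" for j
  proof -
    have "\<bar>v j\<bar> = \<bar>\<Sum>i\<in>UNIV. v i * Q i j\<bar>"
      using assms(2) unfolding stationary_def by metis
    also have "\<dots> \<le> (\<Sum>i\<in>UNIV. \<bar>v i * Q i j\<bar>)" by (rule sum_abs)
    also have "\<dots> = (\<Sum>i\<in>UNIV. \<bar>v i\<bar> * Q i j)" using Q_nonneg by (simp add: abs_mult)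
    finally show ?thesis .
  qed
  \<comment> \<open>equality, because both sides have the same total mass\<close>
  have "(\<Sum>j\<in>UNIV. \<Sum>i\<in>UNIV. \<bar>v i\<bar> * Q i j) = (\<Sum>j\<in>UNIV. \<bar>v j\<bar>)"
    by (subst sum.swap) (simp add: sum_distrib_left[symmetric] Q_rows)
  then have "(\<Sum>j\<in>UNIV. (\<Sum>i\<in>UNIV. \<bar>v i\<bar> * Q i j) - \<bar>v j\<bar>) = 0"
    by (simp add: sum_subtractf)
  then have "\<forall>j\<in>UNIV. (\<Sum>i\<in>UNIV. \<bar>v i\<bar> * Q i j) - \<bar>v j\<bar> = 0"
    using le by (subst sum_nonneg_eq_0_iff[symmetric]) auto
  then show ?thesis unfolding stationary_def by auto
qed

lemma stationary_nonneg_imp_pos: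
  assumes "stochastic Q" "irreducible_mat Q" "stationary Q w" "\<And>i. w i \<ge> 0" "w k > 0"
  shows "w j > 0"
  using assms(2,5)
proof (rule irreducible_mat_propagate)
  fix a b assume "w a > 0" "Q a b > 0"
  then have "0 < w a * Q a b" by simp
  also have "\<dots> \<le> (\<Sum>i\<in>UNIV. w i * Q i b)"
    by (rule member_le_sum) (use assms(1,4) in \<open>auto simp: stochastic_def\<close>)
  also have "\<dots> = w b" using assms(3) unfolding stationary_def by metis
  finally show "w b > 0" .
qed

lemma stationary_sum_zero_eq_0:
  assumes "stochastic Q" "irreducible_mat Q" "stationary Q v" "(\<Sum>i\<in>UNIV. v i) = 0"
  shows "v j = 0"
proof (rule ccontr)
  assume "v j \<noteq> 0"
  have "\<exists>k. v k > 0"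
  proof (rule ccontr)
    assume "\<not> ?thesis"
    then have "\<forall>i\<in>UNIV. - v i \<ge> 0" by (simp add: not_less)
    moreover have "(\<Sum>i\<in>UNIV. - v i) = 0" using assms(4) by (simp add: sum_negf)
    ultimately have "- v i = 0" for i using sum_nonneg_eq_0_iff[of UNIV "\<lambda>i. - v i"] by simp
    with \<open>v j \<noteq> 0\<close> show False by simp
  qed
  then obtain k where k: "v k > 0" by blast
  define u where "u = (\<lambda>i. (1/2) * \<bar>v i\<bar> + (1/2) * v i)"
  have "stationary Q u"
    unfolding u_def by (rule stationary_lincomb[OF stationary_abs[OF assms(1,3)] assms(3)])
  moreover have "u i \<ge> 0" for i unfolding u_def by auto
  moreover have "u k > 0" using k unfolding u_def by auto
  ultimately have u_pos: "u i > 0" for i using stationary_nonneg_imp_pos[OF assms(1,2)] by blast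
  have "v i > 0" for i using u_pos[of i] unfolding u_def by (auto simp: abs_if split: if_splits)
  then have "(\<Sum>i\<in>UNIV. v i) > 0" by (simp add: sum_pos)
  with assms(4) show False by simp
qed

lemma stationary_distribution_unique:
  assumes "stochastic Q" "irreducible_mat Q"
    and "stationary Q x" "(\<Sum>i\<in>UNIV. x i) = 1" "stationary Q y" "(\<Sum>i\<in>UNIV. y i) = 1"
  shows "x = y"
proof -
  have "stationary Q (\<lambda>i. 1 * x i + (-1) * y i)" by (rule stationary_lincomb[OF assms(3,5)])
  moreover have "(\<Sum>i\<in>UNIV. 1 * x i + (-1) * y i) = 0" using assms(4,6) by (simp add: sum_subtractf)
  ultimately have "1 * x i + (-1) * y i = 0" for i by (rule stationary_sum_zero_eq_0[OF assms(1,2)])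
  then show ?thesis by (auto simp: fun_eq_iff)
qed

lemma fun_linear_inj_imp_surj:
  fixes T :: "('s::finite \<Rightarrow> real) \<Rightarrow> ('s \<Rightarrow> real)"
  assumes add: "\<And>x y. T (\<lambda>i. x i + y i) = (\<lambda>i. T x i + T y i)"
    and scale: "\<And>c x. T (\<lambda>i. c * x i) = (\<lambda>i. c * T x i)"
    and ker: "\<And>x. T x = (\<lambda>_. 0) \<Longrightarrow> x = (\<lambda>_. 0)"
  shows "\<exists>x. T x = y"
proof -
  define F where "F = (\<lambda>v::real^'s. vec_lambda (T (vec_nth v)))"
  have lin: "linear F"
  proof (rule linearI)
    fix u v :: "real^'s"
    have e: "vec_nth (u + v) = (\<lambda>i. u $ i + v $ i)" by (rule ext) simp
    show "F (u + v) = F u + F v" unfolding F_def e add by (simp add: vec_eq_iff)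
  next
    fix c :: real and u :: "real^'s"
    have e: "vec_nth (c *\<^sub>R u) = (\<lambda>i. c * u $ i)" by (rule ext) simp
    show "F (c *\<^sub>R u) = c *\<^sub>R F u" unfolding F_def e scale by (simp add: vec_eq_iff)
  qed
  have "inj F"
    unfolding linear_injective_0[OF lin]
  proof (intro allI impI)
    fix x assume "F x = 0"
    then have "T (vec_nth x) = (\<lambda>_. 0)" unfolding F_def by (simp add: vec_eq_iff fun_eq_iff)
    then have "vec_nth x = (\<lambda>_. 0)" by (rule ker)
    then show "x = 0" by (simp add: vec_eq_iff)
  qed
  then obtain v where "F v = vec_lambda y"
    using linear_injective_imp_surjective[OF lin] by (metis surjD)
  then have "T (vec_nth v) = y" unfolding F_def by (simp add: vec_lambda_inject)
  then show ?thesis by blast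
qed

lemma stationary_distribution_exists:
  fixes Q :: "'s::finite \<Rightarrow> 's \<Rightarrow> real"
  assumes st: "stochastic Q" and irr: "irreducible_mat Q"
  shows "\<exists>\<pi>. stationary Q \<pi> \<and> (\<Sum>i\<in>UNIV. \<pi> i) = 1"
proof -
  obtain k :: 's where True by simp
  have Q_rows: "\<And>i. (\<Sum>j\<in>UNIV. Q i j) = 1" using st unfolding stochastic_def by auto
  \<comment> \<open>the balance equations sum to \<open>0\<close>, so the one at \<open>k\<close> can be traded for the normalisation\<close>
  have balance_sum: "(\<Sum>j\<in>UNIV. x j - (\<Sum>i\<in>UNIV. x i * Q i j)) = 0" for x
    by (simp add: sum_subtractf, subst sum.swap) (simp add: sum_distrib_left[symmetric] Q_rows)
  have stationary_if_off_k: "stationary Q x"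
    if "\<And>j. j \<noteq> k \<Longrightarrow> x j - (\<Sum>i\<in>UNIV. x i * Q i j) = 0" for x
  proof -
    have "(\<Sum>j\<in>UNIV. x j - (\<Sum>i\<in>UNIV. x i * Q i j))
        = x k - (\<Sum>i\<in>UNIV. x i * Q i k) + (\<Sum>j\<in>UNIV - {k}. x j - (\<Sum>i\<in>UNIV. x i * Q i j))"
      by (simp add: sum.remove)
    then have "x k - (\<Sum>i\<in>UNIV. x i * Q i k) = 0" using balance_sum[of x] that by simp
    then show ?thesis using that unfolding stationary_def by (metis eq_iff_diff_eq_0)
  qed
  define T where "T = (\<lambda>x::'s\<Rightarrow>real. \<lambda>j.
    if j = k then (\<Sum>i\<in>UNIV. x i) else x j - (\<Sum>i\<in>UNIV. x i * Q i j))"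
  have "\<exists>x. T x = (\<lambda>j. if j = k then 1 else 0)"
  proof (rule fun_linear_inj_imp_surj)
    fix x :: "'s \<Rightarrow> real" assume T0: "T x = (\<lambda>_. 0)"
    then have "stationary Q x"
      by (intro stationary_if_off_k) (metis (mono_tags) T_def)
    moreover have "(\<Sum>i\<in>UNIV. x i) = 0" using fun_cong[OF T0, of k] unfolding T_def by simp
    ultimately show "x = (\<lambda>_. 0)" using stationary_sum_zero_eq_0[OF st irr] by auto
  qed (auto simp: T_def fun_eq_iff sum.distrib sum_distrib_left algebra_simps)
  then obtain x where Tx: "T x = (\<lambda>j. if j = k then 1 else 0)" by blast
  then have "stationary Q x"
    by (intro stationary_if_off_k) (metis (mono_tags) T_def)
  moreover have "(\<Sum>i\<in>UNIV. x i) = 1" using fun_cong[OF Tx, of k] unfolding T_def by simp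
  ultimately show ?thesis by blast
qed

lemma stationary_distribution_nonneg:
  assumes st: "stochastic Q" and irr: "irreducible_mat Q"
    and \<pi>: "stationary Q \<pi>" "(\<Sum>i\<in>UNIV. \<pi> i) = 1"
  shows "\<pi> i \<ge> 0"
proof -
  define s where "s = (\<Sum>i\<in>UNIV. \<bar>\<pi> i\<bar>)"
  have "1 \<le> s" unfolding s_def using \<pi>(2) sum_abs[of \<pi> UNIV] by simp
  define w where "w = (\<lambda>i. (1/s) * \<bar>\<pi> i\<bar> + 0 * \<pi> i)"
  have "stationary Q w"
    unfolding w_def by (rule stationary_lincomb[OF stationary_abs[OF st \<pi>(1)] \<pi>(1)])
  moreover have "(\<Sum>i\<in>UNIV. w i) = 1"
    using \<open>1 \<le> s\<close> unfolding w_def s_def by (simp add: sum_divide_distrib[symmetric])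
  ultimately have "w = \<pi>" using stationary_distribution_unique[OF st irr _ _ \<pi>] by blast
  moreover have "w i \<ge> 0" unfolding w_def using \<open>1 \<le> s\<close> by simp
  ultimately show ?thesis by simp
qed

lemma harmonic_const:
  assumes st: "stochastic Q" and irr: "irreducible_mat Q"
    and h: "\<And>i. h i = (\<Sum>j\<in>UNIV. Q i j * h j)"
  shows "h i = h j"
proof -
  have Q_nonneg: "\<And>i j. Q i j \<ge> 0" and Q_rows: "\<And>i. (\<Sum>j\<in>UNIV. Q i j) = 1"
    using st unfolding stochastic_def by auto
  define M where "M = Max (range h)"
  have le: "h x \<le> M" for x unfolding M_def by simp
  have "M \<in> range h" unfolding M_def by (rule Max_in) auto
  then obtain k where k: "h k = M" by auto
  \<comment> \<open>maximum principle: the maximum spreads along positive transitions\<close>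
  have "h x = M" for x
    using irr k
  proof (rule irreducible_mat_propagate)
    fix a b assume ha: "h a = M" and q: "Q a b > 0"
    have "(\<Sum>j\<in>UNIV. Q a j * (M - h j)) = M * (\<Sum>j\<in>UNIV. Q a j) - (\<Sum>j\<in>UNIV. Q a j * h j)"
      by (simp add: algebra_simps sum_subtractf sum_distrib_left)
    also have "\<dots> = 0" using Q_rows[of a] h[of a] ha by simp
    finally have "\<forall>j\<in>UNIV. Q a j * (M - h j) = 0"
      using Q_nonneg le by (subst sum_nonneg_eq_0_iff[symmetric]) auto
    then have "Q a b * (M - h b) = 0" by simp
    with q show "h b = M" by simp
  qed
  then show ?thesis by simp
qed

lemma poisson_equation_solvable:
  fixes Q :: "'s::finite \<Rightarrow> 's \<Rightarrow> real"
  assumes st: "stochastic Q" and irr: "irreducible_mat Q"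
    and \<pi>: "stationary Q \<pi>" "(\<Sum>i\<in>UNIV. \<pi> i) = 1"
  shows "\<exists>h. \<forall>i. h i - (\<Sum>j\<in>UNIV. Q i j * h j) = c i - (\<Sum>j\<in>UNIV. \<pi> j * c j)"
proof -
  define T where "T = (\<lambda>h::'s\<Rightarrow>real. \<lambda>i. h i - (\<Sum>j\<in>UNIV. Q i j * h j) + (\<Sum>j\<in>UNIV. \<pi> j * h j))"
  have \<pi>_T: "(\<Sum>i\<in>UNIV. \<pi> i * T h i) = (\<Sum>j\<in>UNIV. \<pi> j * h j)" for h
    using stationary_sum_mult[OF \<pi>(1), of h] \<pi>(2)
    by (simp add: T_def algebra_simps sum.distrib sum_subtractf sum_distrib_left[symmetric]
        sum_distrib_right[symmetric])
  have "\<exists>h. T h = (\<lambda>i. c i - (\<Sum>j\<in>UNIV. \<pi> j * c j))"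
  proof (rule fun_linear_inj_imp_surj)
    fix x :: "'s \<Rightarrow> real" assume T0: "T x = (\<lambda>_. 0)"
    have \<pi>_x: "(\<Sum>j\<in>UNIV. \<pi> j * x j) = 0" using \<pi>_T[of x] T0 by simp
    have "x i = (\<Sum>j\<in>UNIV. Q i j * x j)" for i using fun_cong[OF T0, of i] \<pi>_x unfolding T_def by simp
    then obtain m where x_const: "x i = m" for i using harmonic_const[OF st irr] by metis
    then have "m = 0" using \<pi>_x \<pi>(2) by (simp add: sum_distrib_right[symmetric])
    then show "x = (\<lambda>_. 0)" using x_const by auto
  qed (auto simp: T_def fun_eq_iff sum.distrib sum_distrib_left algebra_simps)
  then obtain h where Th: "T h = (\<lambda>i. c i - (\<Sum>j\<in>UNIV. \<pi> j * c j))" by blast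
  have "(\<Sum>j\<in>UNIV. \<pi> j * h j) = (\<Sum>i\<in>UNIV. \<pi> i * (c i - (\<Sum>j\<in>UNIV. \<pi> j * c j)))"
    using \<pi>_T[of h] Th by simp
  also have "\<dots> = 0"
    using \<pi>(2) by (simp add: algebra_simps sum_subtractf sum_distrib_right[symmetric])
  finally show ?thesis using Th unfolding T_def by (auto simp: fun_eq_iff)
qed

lemma stationary_sum_defect:
  assumes "stationary Q' \<pi>'"
  shows "(\<Sum>i\<in>UNIV. \<pi>' i * (h i - (\<Sum>j\<in>UNIV. Q i j * h j)))
       = (\<Sum>i\<in>UNIV. \<pi>' i * (\<Sum>j\<in>UNIV. (Q' i j - Q i j) * h j))"
  using stationary_sum_mult[OF assms, of h]
  by (simp add: algebra_simps sum_subtractf)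

text \<open>A first-order perturbation formula for stationary distributions: \<open>h\<close> solves the
  Poisson equation of \<open>Q\<close> for \<open>c\<close>.\<close>

lemma stationary_perturbation:
  fixes Q :: "'s::finite \<Rightarrow> 's \<Rightarrow> real"
  assumes "stochastic Q" "irreducible_mat Q" "stationary Q \<pi>" "(\<Sum>i\<in>UNIV. \<pi> i) = 1"
  obtains h where "\<And>Q' \<pi>'. stationary Q' \<pi>' \<Longrightarrow> (\<Sum>i\<in>UNIV. \<pi>' i) = 1 \<Longrightarrow>
    (\<Sum>i\<in>UNIV. \<pi>' i * c i) - (\<Sum>i\<in>UNIV. \<pi> i * c i)
      = (\<Sum>i\<in>UNIV. \<pi>' i * (\<Sum>j\<in>UNIV. (Q' i j - Q i j) * h j))"
proof -
  obtain h where h: "\<And>i. h i - (\<Sum>j\<in>UNIV. Q i j * h j) = c i - (\<Sum>j\<in>UNIV. \<pi> j * c j)"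
    using poisson_equation_solvable[OF assms] by blast
  show ?thesis
  proof (rule that)
    fix Q' :: "'s \<Rightarrow> 's \<Rightarrow> real" and \<pi>' assume \<pi>': "stationary Q' \<pi>'" "(\<Sum>i\<in>UNIV. \<pi>' i) = 1"
    have "(\<Sum>i\<in>UNIV. \<pi>' i * c i) - (\<Sum>i\<in>UNIV. \<pi> i * c i)
        = (\<Sum>i\<in>UNIV. \<pi>' i * (c i - (\<Sum>j\<in>UNIV. \<pi> j * c j)))"
      using \<pi>'(2) by (simp add: right_diff_distrib sum_subtractf sum_distrib_right[symmetric])
    also have "\<dots> = (\<Sum>i\<in>UNIV. \<pi>' i * (\<Sum>j\<in>UNIV. (Q' i j - Q i j) * h j))"
      using stationary_sum_defect[OF \<pi>'(1), of h Q] by (simp add: h)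
    finally show "(\<Sum>i\<in>UNIV. \<pi>' i * c i) - (\<Sum>i\<in>UNIV. \<pi> i * c i)
        = (\<Sum>i\<in>UNIV. \<pi>' i * (\<Sum>j\<in>UNIV. (Q' i j - Q i j) * h j))" .
  qed
qed

lemma abs_sum_prob_weighted_le:
  fixes \<pi> :: "'s::finite \<Rightarrow> real"
  assumes "\<And>i. \<pi> i \<ge> 0" "(\<Sum>i\<in>UNIV. \<pi> i) = 1"
  shows "\<bar>\<Sum>i\<in>UNIV. \<pi> i * x i\<bar> \<le> (\<Sum>i\<in>UNIV. \<bar>x i\<bar>)"
proof -
  have "\<pi> i \<le> 1" for i
    using member_le_sum[of i UNIV \<pi>] assms by simp
  then have "\<bar>\<pi> i * x i\<bar> \<le> \<bar>x i\<bar>" for i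
    using assms(1)[of i] by (simp add: abs_mult mult_left_le_one_le)
  then have "(\<Sum>i\<in>UNIV. \<bar>\<pi> i * x i\<bar>) \<le> (\<Sum>i\<in>UNIV. \<bar>x i\<bar>)"
    by (intro sum_mono)
  then show ?thesis
    using sum_abs[of "\<lambda>i. \<pi> i * x i" UNIV] by linarith
qed

section \<open>Randomized policies\<close>

definition policy_avg :: "('s \<Rightarrow> 'a::finite \<Rightarrow> real) \<Rightarrow> ('s \<Rightarrow> 'a \<Rightarrow> real) \<Rightarrow> 's \<Rightarrow> real" where
  "policy_avg \<theta> u i = (\<Sum>a\<in>UNIV. \<theta> i a * u i a)"

definition policy_segment ::
    "('s \<Rightarrow> 'a \<Rightarrow> real) \<Rightarrow> ('s \<Rightarrow> 'a \<Rightarrow> real) \<Rightarrow> real \<Rightarrow> 's \<Rightarrow> 'a \<Rightarrow> real" where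
  "policy_segment \<theta> \<theta>' t = (\<lambda>i a. \<theta> i a + t * (\<theta>' i a - \<theta> i a))"

lemma policy_segment_0 [simp]: "policy_segment \<theta> \<theta>' 0 = \<theta>"
  by (simp add: policy_segment_def)

lemma policy_segment_Theta:
  assumes "\<theta> \<in> Theta" "\<theta>' \<in> Theta" "t \<in> {0..1}"
  shows "policy_segment \<theta> \<theta>' t \<in> Theta"
proof -
  have eq: "policy_segment \<theta> \<theta>' t i a = (1 - t) * \<theta> i a + t * \<theta>' i a" for i a
    by (simp add: policy_segment_def algebra_simps)
  have "policy_segment \<theta> \<theta>' t i a \<ge> 0" for i a
    unfolding eq using assms by (auto simp: Theta_def intro!: add_nonneg_nonneg mult_nonneg_nonneg)
  moreover have "(\<Sum>a\<in>UNIV. policy_segment \<theta> \<theta>' t i a) = 1" for i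
    using assms unfolding eq Theta_def by (simp add: sum.distrib sum_distrib_left[symmetric])
  ultimately show ?thesis unfolding Theta_def by simp
qed

lemma policy_avg_segment:
  "policy_avg (policy_segment \<theta> \<theta>' t) u i
     = policy_avg \<theta> u i + t * policy_avg (\<lambda>i a. \<theta>' i a - \<theta> i a) u i"
  unfolding policy_avg_def policy_segment_def
  by (simp add: distrib_right sum.distrib sum_distrib_left mult.assoc)

lemma Pth_segment:
  "Pth p (policy_segment \<theta> \<theta>' t) i j = Pth p \<theta> i j + t * Pth p (\<lambda>i a. \<theta>' i a - \<theta> i a) i j"
  unfolding Pth_def policy_segment_def
  by (simp add: distrib_left sum.distrib sum_distrib_left mult.left_commute)

lemma Theta_ex_pos:
  assumes "\<theta> \<in> Theta"
  shows "\<exists>a. \<theta> i a > 0"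
proof (rule ccontr)
  assume "\<not> ?thesis"
  then have "\<theta> i a = 0" for a
    using assms unfolding Theta_def by (simp add: not_less order.antisym)
  then have "(\<Sum>a\<in>UNIV. \<theta> i a) = 0" by simp
  with assms show False unfolding Theta_def by simp
qed

text \<open>Multiplied by \<open>\<pi>(i)\<close>, this is the directional derivative \<open>\<Sum>\<^sub>a \<Delta>\<^sub>i\<^sub>,\<^sub>a D\<^sub>i\<^sub>,\<^sub>a\<close> at state \<open>i\<close>.\<close>

definition D_dir :: "('a::finite \<Rightarrow> 's::finite \<Rightarrow> 's \<Rightarrow> real) \<Rightarrow> ('s \<Rightarrow> 'a \<Rightarrow> real) \<Rightarrow> real \<Rightarrow>
    ('s \<Rightarrow> real) \<Rightarrow> ('s \<Rightarrow> 'a \<Rightarrow> real) \<Rightarrow> ('s \<Rightarrow> 'a \<Rightarrow> real) \<Rightarrow> 's \<Rightarrow> real" where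
  "D_dir p r \<beta> g \<theta> \<Delta> i = policy_avg \<Delta> (\<lambda>i a. r i a - \<beta> * (r i a)\<^sup>2) i
     + 2 * \<beta> * J_mu p r \<theta> * policy_avg \<Delta> r i + (\<Sum>j\<in>UNIV. Pth p \<Delta> i j * g j)"

lemma f_th_eq:
  assumes "(\<Sum>a\<in>UNIV. \<theta> i a) = 1"
  shows "f_th p r \<beta> \<theta> i = policy_avg \<theta> (\<lambda>i a. r i a - \<beta> * (r i a)\<^sup>2) i
     + 2 * \<beta> * J_mu p r \<theta> * policy_avg \<theta> r i - \<beta> * (J_mu p r \<theta>)\<^sup>2"
proof -
  have "f_th p r \<beta> \<theta> i = (\<Sum>a\<in>UNIV. \<theta> i a * (r i a - \<beta> * (r i a)\<^sup>2)
      + (2 * \<beta> * J_mu p r \<theta>) * (\<theta> i a * r i a) - (\<beta> * (J_mu p r \<theta>)\<^sup>2) * \<theta> i a)"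
    unfolding f_th_def by (rule sum.cong) (simp_all add: algebra_simps power2_eq_square)
  also have "\<dots> = policy_avg \<theta> (\<lambda>i a. r i a - \<beta> * (r i a)\<^sup>2) i
      + 2 * \<beta> * J_mu p r \<theta> * policy_avg \<theta> r i - \<beta> * (J_mu p r \<theta>)\<^sup>2 * (\<Sum>a\<in>UNIV. \<theta> i a)"
    unfolding policy_avg_def by (simp add: sum.distrib sum_subtractf sum_distrib_left)
  finally show ?thesis using assms by simp
qed

lemma J_mu_eq: "J_mu p r \<theta> = (\<Sum>i\<in>UNIV. stat_dist p \<theta> i * policy_avg \<theta> r i)"
  by (simp add: J_mu_def policy_avg_def)

lemma sum_D_ia_eq:
  "(\<Sum>i\<in>UNIV. \<Sum>a\<in>UNIV. \<Delta> i a * D_ia p r \<beta> g \<theta> i a)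
     = (\<Sum>i\<in>UNIV. stat_dist p \<theta> i * D_dir p r \<beta> g \<theta> \<Delta> i)"
proof (rule sum.cong[OF refl])
  fix i
  let ?\<pi> = "stat_dist p \<theta> i" and ?J = "J_mu p r \<theta>"
  have "(\<Sum>a\<in>UNIV. \<Delta> i a * D_ia p r \<beta> g \<theta> i a)
      = (\<Sum>a\<in>UNIV. ?\<pi> * (\<Delta> i a * (\<Sum>j\<in>UNIV. p a i j * g j)
          + \<Delta> i a * (r i a - \<beta> * (r i a)\<^sup>2) + 2 * \<beta> * ?J * (\<Delta> i a * r i a)))"
    unfolding D_ia_def by (rule sum.cong) (simp_all add: algebra_simps)
  also have "\<dots> = ?\<pi> * ((\<Sum>a\<in>UNIV. \<Delta> i a * (\<Sum>j\<in>UNIV. p a i j * g j))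
      + policy_avg \<Delta> (\<lambda>i a. r i a - \<beta> * (r i a)\<^sup>2) i + 2 * \<beta> * ?J * policy_avg \<Delta> r i)"
    by (simp only: policy_avg_def sum_distrib_left[symmetric] sum.distrib)
  also have "(\<Sum>a\<in>UNIV. \<Delta> i a * (\<Sum>j\<in>UNIV. p a i j * g j)) = (\<Sum>j\<in>UNIV. Pth p \<Delta> i j * g j)"
    unfolding Pth_def sum_distrib_left sum_distrib_right
    by (subst sum.swap) (simp add: algebra_simps)
  finally show "(\<Sum>a\<in>UNIV. \<Delta> i a * D_ia p r \<beta> g \<theta> i a) = ?\<pi> * D_dir p r \<beta> g \<theta> \<Delta> i"
    by (simp add: D_dir_def algebra_simps)
qed

locale mdp =
  fixes p :: "'a::finite \<Rightarrow> 's::finite \<Rightarrow> 's \<Rightarrow> real"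
  assumes p_nonneg: "\<And>a i j. p a i j \<ge> 0"
    and p_stoch: "\<And>a i. (\<Sum>j\<in>UNIV. p a i j) = 1"
    and irred: "\<And>d :: 's \<Rightarrow> 'a. irreducible_mat (\<lambda>i j. p (d i) i j)"
begin

lemma Pth_stochastic:
  assumes "\<theta> \<in> Theta"
  shows "stochastic (Pth p \<theta>)"
proof -
  have "(\<Sum>j\<in>UNIV. Pth p \<theta> i j) = (\<Sum>a\<in>UNIV. \<theta> i a)" for i
    unfolding Pth_def by (subst sum.swap) (simp add: sum_distrib_right[symmetric] p_stoch)
  with assms p_nonneg show ?thesis
    unfolding stochastic_def Theta_def Pth_def by (auto intro: sum_nonneg)
qed

lemma Pth_irreducible:
  assumes "\<theta> \<in> Theta"
  shows "irreducible_mat (Pth p \<theta>)"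
proof -
  obtain d where d: "\<And>i. \<theta> i (d i) > 0"
    using Theta_ex_pos[OF assms] by metis
  have "{(x, y). p (d x) x y > 0} \<subseteq> {(x, y). Pth p \<theta> x y > 0}"
  proof safe
    fix x y assume "p (d x) x y > 0"
    then have "0 < p (d x) x y * \<theta> x (d x)" using d by simp
    also have "\<dots> \<le> Pth p \<theta> x y" unfolding Pth_def
      by (rule member_le_sum) (use p_nonneg assms in \<open>auto simp: Theta_def\<close>)
    finally show "Pth p \<theta> x y > 0" .
  qed
  then show ?thesis
    using irred[of d] rtrancl_mono unfolding irreducible_mat_def by blast
qed

lemma stat_dist:
  assumes "\<theta> \<in> Theta"
  shows stat_dist_stationary: "stationary (Pth p \<theta>) (stat_dist p \<theta>)"
    and stat_dist_sum: "(\<Sum>i\<in>UNIV. stat_dist p \<theta> i) = 1"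
    and stat_dist_nonneg: "stat_dist p \<theta> i \<ge> 0"
proof -
  note st = Pth_stochastic[OF assms] and irr = Pth_irreducible[OF assms]
  have "\<exists>!\<pi>. stationary (Pth p \<theta>) \<pi> \<and> (\<Sum>i\<in>UNIV. \<pi> i) = 1"
    using stationary_distribution_exists[OF st irr] stationary_distribution_unique[OF st irr] by blast
  then have "stationary (Pth p \<theta>) (stat_dist p \<theta>) \<and> (\<Sum>i\<in>UNIV. stat_dist p \<theta> i) = 1"
    unfolding stat_dist_def stationary_def[abs_def] by (rule theI')
  then show "stationary (Pth p \<theta>) (stat_dist p \<theta>)" "(\<Sum>i\<in>UNIV. stat_dist p \<theta> i) = 1"
    and "stat_dist p \<theta> i \<ge> 0"
    using stationary_distribution_nonneg[OF st irr] by auto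
qed

text \<open>Variance decomposition: \<open>\<pi>(r - \<beta>(r - J\<^sub>\<mu>)\<^sup>2) = \<pi>(r - \<beta>r\<^sup>2) + \<beta>J\<^sub>\<mu>\<^sup>2\<close>, because \<open>\<pi>r = J\<^sub>\<mu>\<close>.\<close>

lemma J_mu_sigma_eq:
  assumes "\<theta> \<in> Theta"
  shows "J_mu_sigma p r \<beta> \<theta> = (\<Sum>i\<in>UNIV. stat_dist p \<theta> i * policy_avg \<theta> (\<lambda>i a. r i a - \<beta> * (r i a)\<^sup>2) i)
      + \<beta> * (J_mu p r \<theta>)\<^sup>2"
proof -
  have rows: "(\<Sum>a\<in>UNIV. \<theta> i a) = 1" for i using assms unfolding Theta_def by auto
  show ?thesis
    unfolding J_mu_sigma_def f_th_eq[OF rows]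
    using stat_dist_sum[OF assms]
    by (simp add: J_mu_eq[of p r \<theta>, symmetric] algebra_simps sum.distrib sum_subtractf
        sum_distrib_left[symmetric] sum_distrib_right[symmetric] power2_eq_square)
qed

lemma stat_dist_segment_lipschitz:
  assumes \<theta>: "\<theta> \<in> Theta" and \<theta>': "\<theta>' \<in> Theta"
  shows "\<exists>K. \<forall>t\<in>{0..1}. \<bar>(\<Sum>i\<in>UNIV. stat_dist p (policy_segment \<theta> \<theta>' t) i * c i)
                             - (\<Sum>i\<in>UNIV. stat_dist p \<theta> i * c i)\<bar> \<le> t * K"
proof -
  obtain h where h: "\<And>Q' \<pi>'. stationary Q' \<pi>' \<Longrightarrow> (\<Sum>i\<in>UNIV. \<pi>' i) = 1 \<Longrightarrow>
      (\<Sum>i\<in>UNIV. \<pi>' i * c i) - (\<Sum>i\<in>UNIV. stat_dist p \<theta> i * c i)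
        = (\<Sum>i\<in>UNIV. \<pi>' i * (\<Sum>j\<in>UNIV. (Q' i j - Pth p \<theta> i j) * h j))"
    using stationary_perturbation[OF Pth_stochastic Pth_irreducible stat_dist_stationary stat_dist_sum,
        OF \<theta> \<theta> \<theta> \<theta>] by blast
  define dPh where "dPh i = (\<Sum>j\<in>UNIV. Pth p (\<lambda>i a. \<theta>' i a - \<theta> i a) i j * h j)" for i
  have "\<bar>(\<Sum>i\<in>UNIV. stat_dist p (policy_segment \<theta> \<theta>' t) i * c i) - (\<Sum>i\<in>UNIV. stat_dist p \<theta> i * c i)\<bar>
      \<le> t * (\<Sum>i\<in>UNIV. \<bar>dPh i\<bar>)" if t: "t \<in> {0..1}" for t
  proof -
    note \<theta>t = policy_segment_Theta[OF \<theta> \<theta>' t]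
    have "(\<Sum>i\<in>UNIV. stat_dist p (policy_segment \<theta> \<theta>' t) i * c i) - (\<Sum>i\<in>UNIV. stat_dist p \<theta> i * c i)
        = t * (\<Sum>i\<in>UNIV. stat_dist p (policy_segment \<theta> \<theta>' t) i * dPh i)"
      using h[OF stat_dist_stationary[OF \<theta>t] stat_dist_sum[OF \<theta>t]]
      by (simp add: Pth_segment dPh_def sum_distrib_left algebra_simps)
    also have "\<bar>\<dots>\<bar> \<le> t * (\<Sum>i\<in>UNIV. \<bar>dPh i\<bar>)"
      using t abs_sum_prob_weighted_le[OF stat_dist_nonneg[OF \<theta>t] stat_dist_sum[OF \<theta>t]]
      by (simp add: abs_mult mult_left_mono)
    finally show ?thesis .
  qed
  then show ?thesis by blast
qed

lemma J_mu_segment_lipschitz: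
  assumes \<theta>: "\<theta> \<in> Theta" and \<theta>': "\<theta>' \<in> Theta"
  shows "\<exists>M. \<forall>t\<in>{0..1}. \<bar>J_mu p r (policy_segment \<theta> \<theta>' t) - J_mu p r \<theta>\<bar> \<le> t * M"
proof -
  define dR where "dR = policy_avg (\<lambda>i a. \<theta>' i a - \<theta> i a) r"
  obtain K where K: "\<forall>t\<in>{0..1}. \<bar>(\<Sum>i\<in>UNIV. stat_dist p (policy_segment \<theta> \<theta>' t) i * policy_avg \<theta> r i)
      - (\<Sum>i\<in>UNIV. stat_dist p \<theta> i * policy_avg \<theta> r i)\<bar> \<le> t * K"
    using stat_dist_segment_lipschitz[OF assms] by blast
  have "\<bar>J_mu p r (policy_segment \<theta> \<theta>' t) - J_mu p r \<theta>\<bar> \<le> t * (K + (\<Sum>i\<in>UNIV. \<bar>dR i\<bar>))"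
    if t: "t \<in> {0..1}" for t
  proof -
    note \<theta>t = policy_segment_Theta[OF \<theta> \<theta>' t]
    let ?\<pi> = "stat_dist p (policy_segment \<theta> \<theta>' t)"
    have "J_mu p r (policy_segment \<theta> \<theta>' t) - J_mu p r \<theta>
        = ((\<Sum>i\<in>UNIV. ?\<pi> i * policy_avg \<theta> r i) - (\<Sum>i\<in>UNIV. stat_dist p \<theta> i * policy_avg \<theta> r i))
          + t * (\<Sum>i\<in>UNIV. ?\<pi> i * dR i)"
      unfolding J_mu_eq policy_avg_segment dR_def
      by (simp add: distrib_left sum.distrib sum_distrib_left mult.left_commute)
    moreover have "\<bar>t * (\<Sum>i\<in>UNIV. ?\<pi> i * dR i)\<bar> \<le> t * (\<Sum>i\<in>UNIV. \<bar>dR i\<bar>)"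
      using t abs_sum_prob_weighted_le[OF stat_dist_nonneg[OF \<theta>t] stat_dist_sum[OF \<theta>t]]
      by (simp add: abs_mult mult_left_mono)
    moreover have "\<bar>(\<Sum>i\<in>UNIV. ?\<pi> i * policy_avg \<theta> r i) - (\<Sum>i\<in>UNIV. stat_dist p \<theta> i * policy_avg \<theta> r i)\<bar> \<le> t * K"
      using K t by blast
    ultimately show ?thesis
      by (simp add: distrib_left abs_le_iff)
  qed
  then show ?thesis by blast
qed

text \<open>Pairing the potential equation of \<open>\<theta>\<close> with the stationary distribution of \<open>\<theta>\<^sub>t\<close> makes
  this expansion exact: \<open>\<pi>\<^sub>t\<close> enters the remainder only through \<open>J\<^sub>\<mu>\<close>.\<close>

lemma J_mu_sigma_segment_diff:
  assumes \<theta>: "\<theta> \<in> Theta" and \<theta>': "\<theta>' \<in> Theta" and pot: "is_potential p r \<beta> \<theta> g"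
    and t: "t \<in> {0..1}"
  shows "J_mu_sigma p r \<beta> (policy_segment \<theta> \<theta>' t) - J_mu_sigma p r \<beta> \<theta>
    = t * (\<Sum>i\<in>UNIV. stat_dist p (policy_segment \<theta> \<theta>' t) i * D_dir p r \<beta> g \<theta> (\<lambda>i a. \<theta>' i a - \<theta> i a) i)
      + \<beta> * (J_mu p r (policy_segment \<theta> \<theta>' t) - J_mu p r \<theta>)\<^sup>2"
proof -
  note \<theta>t = policy_segment_Theta[OF \<theta> \<theta>' t]
  define \<Delta> where "\<Delta> = (\<lambda>i a. \<theta>' i a - \<theta> i a)"
  define E where "E u = (\<Sum>i\<in>UNIV. stat_dist p (policy_segment \<theta> \<theta>' t) i * u i)" for u
  define u\<^sub>\<beta> where "u\<^sub>\<beta> = (\<lambda>i a. r i a - \<beta> * (r i a)\<^sup>2)"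
  define J\<^sub>0 where "J\<^sub>0 = J_mu p r \<theta>"
  define J\<^sub>t where "J\<^sub>t = J_mu p r (policy_segment \<theta> \<theta>' t)"
  define Js\<^sub>0 where "Js\<^sub>0 = J_mu_sigma p r \<beta> \<theta>"
  define Pg where "Pg i = (\<Sum>j\<in>UNIV. Pth p \<Delta> i j * g j)" for i
  have E_affine: "E (\<lambda>i. x i + a * y i) = E x + a * E y" for x y a
    by (simp add: E_def distrib_left sum.distrib sum_distrib_left mult.left_commute)
  have J\<^sub>t: "J\<^sub>t = E (policy_avg \<theta> r) + t * E (policy_avg \<Delta> r)"
    unfolding J\<^sub>t_def J_mu_eq policy_avg_segment \<Delta>_def[symmetric] E_affine[symmetric]
    by (simp add: E_def)
  have Js\<^sub>t: "J_mu_sigma p r \<beta> (policy_segment \<theta> \<theta>' t)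
      = E (policy_avg \<theta> u\<^sub>\<beta>) + t * E (policy_avg \<Delta> u\<^sub>\<beta>) + \<beta> * J\<^sub>t\<^sup>2"
    unfolding J_mu_sigma_eq[OF \<theta>t] policy_avg_segment \<Delta>_def[symmetric] E_affine[symmetric]
      J\<^sub>t_def u\<^sub>\<beta>_def
    by (simp add: E_def)
  \<comment> \<open>\<open>E f\<^sub>\<theta>\<close> computed twice: from the definition of \<open>f\<^sub>\<theta>\<close> and from the potential equation\<close>
  have "E (f_th p r \<beta> \<theta>) = E (\<lambda>i. policy_avg \<theta> u\<^sub>\<beta> i + (2 * \<beta> * J\<^sub>0) * policy_avg \<theta> r i + (- \<beta> * J\<^sub>0\<^sup>2) * 1)"
  proof -
    have "(\<Sum>a\<in>UNIV. \<theta> i a) = 1" for i using \<theta> unfolding Theta_def by auto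
    then have "f_th p r \<beta> \<theta> = (\<lambda>i. policy_avg \<theta> u\<^sub>\<beta> i + (2 * \<beta> * J\<^sub>0) * policy_avg \<theta> r i + (- \<beta> * J\<^sub>0\<^sup>2) * 1)"
      by (simp add: f_th_eq J\<^sub>0_def u\<^sub>\<beta>_def fun_eq_iff)
    then show ?thesis by simp
  qed
  also have "\<dots> = E (policy_avg \<theta> u\<^sub>\<beta>) + 2 * \<beta> * J\<^sub>0 * E (policy_avg \<theta> r) - \<beta> * J\<^sub>0\<^sup>2"
    using E_affine[of "\<lambda>i. policy_avg \<theta> u\<^sub>\<beta> i + (2 * \<beta> * J\<^sub>0) * policy_avg \<theta> r i" "- \<beta> * J\<^sub>0\<^sup>2" "\<lambda>_. 1"]
      E_affine[of "policy_avg \<theta> u\<^sub>\<beta>" "2 * \<beta> * J\<^sub>0" "policy_avg \<theta> r"] stat_dist_sum[OF \<theta>t]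
    by (simp add: E_def)
  finally have Ef_by_def: "E (f_th p r \<beta> \<theta>) = E (policy_avg \<theta> u\<^sub>\<beta>) + 2 * \<beta> * J\<^sub>0 * E (policy_avg \<theta> r) - \<beta> * J\<^sub>0\<^sup>2" .
  have "f_th p r \<beta> \<theta> i = (g i - (\<Sum>j\<in>UNIV. Pth p \<theta> i j * g j)) + Js\<^sub>0 * 1" for i
    using pot unfolding is_potential_def Js\<^sub>0_def by (metis add_diff_cancel_left' diff_add_eq diff_diff_eq2 mult_1_right)
  then have "E (f_th p r \<beta> \<theta>) = E (\<lambda>i. g i - (\<Sum>j\<in>UNIV. Pth p \<theta> i j * g j)) + Js\<^sub>0"
    using E_affine[of "\<lambda>i. g i - (\<Sum>j\<in>UNIV. Pth p \<theta> i j * g j)" Js\<^sub>0 "\<lambda>_. 1"] stat_dist_sum[OF \<theta>t]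
    by (simp add: E_def)
  also have "E (\<lambda>i. g i - (\<Sum>j\<in>UNIV. Pth p \<theta> i j * g j)) = t * E Pg"
    using stationary_sum_defect[OF stat_dist_stationary[OF \<theta>t], of g "Pth p \<theta>"]
    by (simp add: E_def Pg_def Pth_segment \<Delta>_def sum_distrib_left algebra_simps)
  finally have Ef_by_pot: "E (f_th p r \<beta> \<theta>) = t * E Pg + Js\<^sub>0" .
  have "D_dir p r \<beta> g \<theta> \<Delta>
      = (\<lambda>i. (policy_avg \<Delta> u\<^sub>\<beta> i + (2 * \<beta> * J\<^sub>0) * policy_avg \<Delta> r i) + 1 * Pg i)"
    by (simp add: fun_eq_iff D_dir_def J\<^sub>0_def u\<^sub>\<beta>_def Pg_def)
  then have "E (D_dir p r \<beta> g \<theta> \<Delta>) = E (policy_avg \<Delta> u\<^sub>\<beta>) + 2 * \<beta> * J\<^sub>0 * E (policy_avg \<Delta> r) + E Pg"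
    by (simp only: E_affine)
  then show ?thesis
    unfolding \<Delta>_def[symmetric] E_def[symmetric] J\<^sub>t_def[symmetric] J\<^sub>0_def[symmetric] Js\<^sub>0_def[symmetric] Js\<^sub>t
    using J\<^sub>t Ef_by_def Ef_by_pot by (simp add: power2_eq_square algebra_simps)
qed


lemma J_mu_sigma_segment_quotient_bound:
  assumes \<theta>: "\<theta> \<in> Theta" and \<theta>': "\<theta>' \<in> Theta" and pot: "is_potential p r \<beta> \<theta> g"
  shows "\<exists>C. \<forall>t. 0 < t \<longrightarrow> t < 1 \<longrightarrow>
    \<bar>(J_mu_sigma p r \<beta> (policy_segment \<theta> \<theta>' t) - J_mu_sigma p r \<beta> \<theta>) / t
      - (\<Sum>i\<in>UNIV. stat_dist p \<theta> i * D_dir p r \<beta> g \<theta> (\<lambda>i a. \<theta>' i a - \<theta> i a) i)\<bar> \<le> C * t"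
proof -
  define c where "c = D_dir p r \<beta> g \<theta> (\<lambda>i a. \<theta>' i a - \<theta> i a)"
  define L where "L = (\<Sum>i\<in>UNIV. stat_dist p \<theta> i * c i)"
  define E where "E t = (\<Sum>i\<in>UNIV. stat_dist p (policy_segment \<theta> \<theta>' t) i * c i)" for t
  define J where "J t = J_mu p r (policy_segment \<theta> \<theta>' t)" for t
  obtain K where K: "\<forall>t\<in>{0..1}. \<bar>E t - L\<bar> \<le> t * K"
    using stat_dist_segment_lipschitz[OF \<theta> \<theta>'] unfolding E_def L_def by blast
  obtain M where M: "\<forall>t\<in>{0..1}. \<bar>J t - J 0\<bar> \<le> t * M"
    using J_mu_segment_lipschitz[OF \<theta> \<theta>'] unfolding J_def by auto
  have "\<bar>(J_mu_sigma p r \<beta> (policy_segment \<theta> \<theta>' t) - J_mu_sigma p r \<beta> \<theta>) / t - L\<bar>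
      \<le> (K + \<bar>\<beta>\<bar> * M\<^sup>2) * t" if "0 < t" "t < 1" for t
  proof -
    have t: "t \<in> {0..1}" using that by simp
    have "(J_mu_sigma p r \<beta> (policy_segment \<theta> \<theta>' t) - J_mu_sigma p r \<beta> \<theta>) / t - L
        = (E t - L) + \<beta> * (J t - J 0)\<^sup>2 / t"
      using J_mu_sigma_segment_diff[OF \<theta> \<theta>' pot t] \<open>0 < t\<close>
      by (simp add: J_def E_def c_def field_simps)
    moreover have "\<bar>E t - L\<bar> \<le> K * t"
      using K t by (metis mult.commute)
    moreover have "\<bar>\<beta> * (J t - J 0)\<^sup>2 / t\<bar> \<le> \<bar>\<beta>\<bar> * M\<^sup>2 * t"
    proof -
      have "(J t - J 0)\<^sup>2 \<le> (t * M)\<^sup>2"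
        using M t by (metis abs_ge_zero power2_abs power_mono)
      then have "\<bar>\<beta> * (J t - J 0)\<^sup>2 / t\<bar> \<le> \<bar>\<beta>\<bar> * (t * M)\<^sup>2 / t"
        using \<open>0 < t\<close> by (simp add: abs_mult divide_right_mono mult_left_mono)
      also have "\<dots> = \<bar>\<beta>\<bar> * M\<^sup>2 * t"
        using \<open>0 < t\<close> by (simp add: power2_eq_square)
      finally show ?thesis .
    qed
    ultimately show ?thesis
      using abs_triangle_ineq[of "E t - L" "\<beta> * (J t - J 0)\<^sup>2 / t"]
      unfolding distrib_right by linarith
  qed
  then show ?thesis unfolding L_def c_def by blast
qed

end

theorem lemma3:
  fixes p :: "'a::finite \<Rightarrow> 's::finite \<Rightarrow> 's \<Rightarrow> real"
    and r :: "'s \<Rightarrow> 'a \<Rightarrow> real"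
    and \<beta> :: real
    and \<theta> \<theta>' :: "'s \<Rightarrow> 'a \<Rightarrow> real"
    and g :: "'s \<Rightarrow> real"
  assumes p_nonneg: "\<And>a i j. p a i j \<ge> 0"
    and p_stoch: "\<And>a i. (\<Sum>j\<in>UNIV. p a i j) = 1"
    and irred: "\<And>d :: 's \<Rightarrow> 'a. irreducible_mat (\<lambda>i j. p (d i) i j)"
    and beta_pos: "\<beta> > 0"
    and theta: "\<theta> \<in> Theta"
    and theta': "\<theta>' \<in> Theta"
    and pot: "is_potential p r \<beta> \<theta> g"
  shows "((\<lambda>t. J_mu_sigma p r \<beta> (\<lambda>i a. \<theta> i a + t * (\<theta>' i a - \<theta> i a)))
           has_real_derivative
           (\<Sum>i\<in>UNIV. \<Sum>a\<in>UNIV. (\<theta>' i a - \<theta> i a) * D_ia p r \<beta> g \<theta> i a)) (at_right 0)"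
proof -
  interpret mdp p
    using p_nonneg p_stoch irred by unfold_locales
  \<comment> \<open>the bound holds for every \<open>\<beta>\<close>\<close>
  obtain C where "\<And>t. 0 < t \<Longrightarrow> t < 1 \<Longrightarrow>
    \<bar>(J_mu_sigma p r \<beta> (policy_segment \<theta> \<theta>' t) - J_mu_sigma p r \<beta> \<theta>) / t
      - (\<Sum>i\<in>UNIV. stat_dist p \<theta> i * D_dir p r \<beta> g \<theta> (\<lambda>i a. \<theta>' i a - \<theta> i a) i)\<bar> \<le> C * t"
    using J_mu_sigma_segment_quotient_bound[OF theta theta' pot] by blast
  then have "((\<lambda>t. J_mu_sigma p r \<beta> (policy_segment \<theta> \<theta>' t)) has_real_derivative
      (\<Sum>i\<in>UNIV. stat_dist p \<theta> i * D_dir p r \<beta> g \<theta> (\<lambda>i a. \<theta>' i a - \<theta> i a) i)) (at_right 0)"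
    by (intro has_real_derivative_at_right_0I[of 1]) auto
  then show ?thesis
    unfolding policy_segment_def sum_D_ia_eq[symmetric] .
qed

end
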